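(* There exists $n_0$ such that the following holds for all $n>n_0$. Let $r\ge25$ and let $A\subseteq S_n$ be a conjugacy class with $\mu(A)\ge e^{-n}$ such that every permutation in $A$ has at most $(r/2)^{\ell}$ cycles of length $\ell$, for every $\ell\ge1$. Then $A$ is $r$-global, i.e. for every $d\ge1$ and every $d$-umvirate $U_{I\to J}$ we have $\mu_{U_{I\to J}}(A)\le r^{d}\mu(A)$.
   Context: $\mu(A)=|A|/n!$. For distinct $i_1,\dots,i_d$ and distinct $j_1,\dots,j_d$ in $[n]$, with $I=(i_1,\dots,i_d)$, $J=(j_1,\dots,j_d)$, the $d$-umvirate $U_{I\to J}$ is the set of $\pi\in S_n$ with $\pi(i_k)=j_k$ for all $k$, and $\mu_{U}(A)=|A\cap U|/|U|$. *)

theory Defs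
  imports "HOL-Analysis.Analysis" "HOL-Combinatorics.Combinatorics"
begin

definition Sym :: "nat \<Rightarrow> (nat \<Rightarrow> nat) set" where
  "Sym n = {p. p permutes {..<n}}"

definition mu :: "nat \<Rightarrow> (nat \<Rightarrow> nat) set \<Rightarrow> real" where
  "mu n A = real (card A) / fact n"

definition conj_class :: "nat \<Rightarrow> (nat \<Rightarrow> nat) set \<Rightarrow> bool" where
  "conj_class n A \<longleftrightarrow> (\<exists>p \<in> Sym n. A = {s \<circ> p \<circ> inv s | s. s \<in> Sym n})"

definition num_cycles :: "nat \<Rightarrow> (nat \<Rightarrow> nat) \<Rightarrow> nat \<Rightarrow> nat" where
  "num_cycles n p l = card {C. \<exists>x \<in> {..<n}. C = orbit p x \<and> card C = l}"

definition umvirate :: "nat \<Rightarrow> nat list \<Rightarrow> nat list \<Rightarrow> (nat \<Rightarrow> nat) set" where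
  "umvirate n I J = {p \<in> Sym n. \<forall>k < length I. p (I ! k) = J ! k}"

definition is_umvirate_index :: "nat \<Rightarrow> nat \<Rightarrow> nat list \<Rightarrow> nat list \<Rightarrow> bool" where
  "is_umvirate_index n d I J \<longleftrightarrow> length I = d \<and> length J = d \<and> distinct I \<and> distinct J
     \<and> set I \<subseteq> {..<n} \<and> set J \<subseteq> {..<n}"

definition mu_U :: "nat \<Rightarrow> nat list \<Rightarrow> nat list \<Rightarrow> (nat \<Rightarrow> nat) set \<Rightarrow> real" where
  "mu_U n I J A = real (card (A \<inter> umvirate n I J)) / real (card (umvirate n I J))"

definition r_global :: "nat \<Rightarrow> real \<Rightarrow> (nat \<Rightarrow> nat) set \<Rightarrow> bool" where
  "r_global n r A \<longleftrightarrow> (\<forall>d \<ge> 1. \<forall>I J. is_umvirate_index n d I J \<longrightarrow>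
      mu_U n I J A \<le> r ^ d * mu n A)"

end

theory Submission
  imports Defs
begin

text \<open>For the conjugacy class A of p, double counting conjugators gives
  mu_U(A) = mu(A) |T| / (n - d)!, where T is the set of permutations s with p (s i_k) = s j_k for all k.
  Such an s is its restriction to I \<union> J, an injection intertwining the partial map i_k \<mapsto> j_k with p,
  together with one of (n - |I \<union> J|)! extensions. Intertwining injections are counted by peeling off the
  partial map: a point mapped outside the current domain leaves a free choice among n values, while a closed
  cycle of length m has to go onto a cycle of p of length m, and there are at most m (r/2)^m \<le> r^m points on
  such cycles. Hence |T| \<le> r^d (n - d)! as long as 5d \<le> 2n; for larger d the bound is trivial because
  mu(A) \<ge> e^-n \<ge> 25^-d.\<close>

lemma finite_Sym: "finite (Sym n)"
  unfolding Sym_def using finite_permutations[of "{..<n}"] by simp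

lemma card_Sym: "card (Sym n) = fact n"
  unfolding Sym_def using card_permutations[of "{..<n}" n] by simp

lemma id_in_Sym: "id \<in> Sym n"
  by (simp add: Sym_def permutes_id)

lemma Sym_bij: "s \<in> Sym n \<Longrightarrow> bij s"
  unfolding Sym_def by (simp add: permutes_bij)

lemma Sym_comp: "s \<in> Sym n \<Longrightarrow> t \<in> Sym n \<Longrightarrow> s \<circ> t \<in> Sym n"
  unfolding Sym_def by (simp add: permutes_compose)

lemma Sym_inv: "s \<in> Sym n \<Longrightarrow> inv s \<in> Sym n"
  unfolding Sym_def by (simp add: permutes_inv)

lemma inj_on_extends_to_permutes:
  assumes X: "finite X" and S: "S \<subseteq> X" and inj: "inj_on \<phi> S" and im: "\<phi> ` S \<subseteq> X"
  obtains \<rho> where "\<rho> permutes X" "\<forall>x\<in>S. \<rho> x = \<phi> x"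
proof -
  have "finite S" using X S by (rule finite_subset[rotated])
  then have "card (X - S) = card (X - \<phi> ` S)"
    using S im inj by (simp add: card_Diff_subset card_image)
  then obtain h where h: "bij_betw h (X - S) (X - \<phi> ` S)"
    using finite_same_card_bij[of "X - S" "X - \<phi> ` S"] X by auto
  define \<rho> where "\<rho> = (\<lambda>x. if x \<in> S then \<phi> x else if x \<in> X then h x else x)"
  have "bij_betw \<rho> S (\<phi> ` S)"
    using inj unfolding bij_betw_def \<rho>_def by (auto simp: inj_on_def image_def)
  moreover have "bij_betw \<rho> (X - S) (X - \<phi> ` S)"
    using h by (rule bij_betw_cong[THEN iffD1, rotated]) (auto simp: \<rho>_def)
  ultimately have "bij_betw \<rho> (S \<union> (X - S)) (\<phi> ` S \<union> (X - \<phi> ` S))"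
    by (rule bij_betw_combine) auto
  moreover have "S \<union> (X - S) = X" "\<phi> ` S \<union> (X - \<phi> ` S) = X"
    using S im by auto
  ultimately have "\<rho> permutes X"
    by (intro bij_imp_permutes) (auto simp: \<rho>_def)
  moreover have "\<forall>x\<in>S. \<rho> x = \<phi> x"
    by (simp add: \<rho>_def)
  ultimately show ?thesis
    using that by blast
qed

lemma permutes_agreeing_eq_image:
  assumes \<rho>0: "\<rho>0 permutes X"
  shows "{\<rho>. \<rho> permutes X \<and> (\<forall>x\<in>S. \<rho> x = \<rho>0 x)} = (\<circ>) \<rho>0 ` {\<sigma>. \<sigma> permutes (X - S)}"
proof (intro set_eqI iffI)
  fix \<rho> assume "\<rho> \<in> {\<rho>. \<rho> permutes X \<and> (\<forall>x\<in>S. \<rho> x = \<rho>0 x)}"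
  then have \<rho>: "\<rho> permutes X" "\<forall>x\<in>S. \<rho> x = \<rho>0 x" by auto
  define \<sigma> where "\<sigma> = inv \<rho>0 \<circ> \<rho>"
  have "\<sigma> permutes X"
    unfolding \<sigma>_def by (rule permutes_compose[OF \<rho>(1) permutes_inv[OF \<rho>0]])
  moreover have "\<sigma> x = x" if "x \<in> S" for x
    using \<rho>(2) that permutes_inverses(2)[OF \<rho>0, of x] by (simp add: \<sigma>_def)
  ultimately have "\<sigma> permutes (X - S)"
    unfolding permutes_def by (metis Diff_iff)
  moreover have "\<rho> = \<rho>0 \<circ> \<sigma>"
    unfolding \<sigma>_def using permutes_inverses(1)[OF \<rho>0] by (auto simp: fun_eq_iff)
  ultimately show "\<rho> \<in> (\<circ>) \<rho>0 ` {\<sigma>. \<sigma> permutes (X - S)}" by blast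
next
  fix \<rho> assume "\<rho> \<in> (\<circ>) \<rho>0 ` {\<sigma>. \<sigma> permutes (X - S)}"
  then obtain \<sigma> where \<sigma>: "\<sigma> permutes (X - S)" "\<rho> = \<rho>0 \<circ> \<sigma>" by blast
  have "\<sigma> permutes X" using \<sigma>(1) permutes_subset by blast
  then have "\<rho> permutes X" using \<sigma>(2) permutes_compose \<rho>0 by blast
  moreover have "\<rho> x = \<rho>0 x" if "x \<in> S" for x
    using \<sigma>(2) that permutes_not_in[OF \<sigma>(1), of x] by simp
  ultimately show "\<rho> \<in> {\<rho>. \<rho> permutes X \<and> (\<forall>x\<in>S. \<rho> x = \<rho>0 x)}" by blast
qed

lemma card_permutes_extending:
  assumes X: "finite X" and S: "S \<subseteq> X" and inj: "inj_on \<phi> S" and im: "\<phi> ` S \<subseteq> X"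
  shows "card {\<rho>. \<rho> permutes X \<and> (\<forall>x\<in>S. \<rho> x = \<phi> x)} = fact (card X - card S)"
proof -
  obtain \<rho>0 where \<rho>0: "\<rho>0 permutes X" "\<forall>x\<in>S. \<rho>0 x = \<phi> x"
    using inj_on_extends_to_permutes[OF assms] .
  have "{\<rho>. \<rho> permutes X \<and> (\<forall>x\<in>S. \<rho> x = \<phi> x)} = (\<circ>) \<rho>0 ` {\<sigma>. \<sigma> permutes (X - S)}"
    using permutes_agreeing_eq_image[OF \<rho>0(1), of S] \<rho>0(2) by simp
  moreover have "inj_on ((\<circ>) \<rho>0) {\<sigma>. \<sigma> permutes (X - S)}"
  proof (rule inj_onI)
    fix a b assume "\<rho>0 \<circ> a = \<rho>0 \<circ> b"
    then have "inv \<rho>0 \<circ> (\<rho>0 \<circ> a) = inv \<rho>0 \<circ> (\<rho>0 \<circ> b)" by simp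
    then show "a = b" using permutes_inverses(2)[OF \<rho>0(1)] by (simp add: fun_eq_iff)
  qed
  moreover have "card (X - S) = card X - card S"
    using X S by (meson card_Diff_subset finite_subset)
  ultimately show ?thesis
    using X by (simp add: card_image card_permutations)
qed

lemma conj_comp:
  assumes "bij t" "bij s"
  shows "(t \<circ> s) \<circ> p \<circ> inv (t \<circ> s) = t \<circ> (s \<circ> p \<circ> inv s) \<circ> inv t"
  using assms by (simp add: o_inv_distrib o_assoc)

lemma conj_inj:
  assumes "bij t" "t \<circ> x \<circ> inv t = t \<circ> y \<circ> inv t"
  shows "x = y"
proof
  fix w
  have "t (x (inv t (t w))) = t (y (inv t (t w)))" using assms(2) by (metis comp_apply)
  then show "x w = y w" using assms(1) by (simp add: bij_is_inj inv_f_f inj_eq)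
qed

lemma card_conjugators:
  assumes p: "p \<in> Sym n" and X: "X \<subseteq> {s \<circ> p \<circ> inv s | s. s \<in> Sym n}"
  shows "card {\<tau> \<in> Sym n. \<tau> \<circ> p \<circ> inv \<tau> \<in> X} = card X * card {\<tau> \<in> Sym n. \<tau> \<circ> p \<circ> inv \<tau> = p}"
proof -
  define Z where "Z = {\<tau> \<in> Sym n. \<tau> \<circ> p \<circ> inv \<tau> = p}"
  define F where "F a = {\<tau> \<in> Sym n. \<tau> \<circ> p \<circ> inv \<tau> = a}" for a
  have "X \<subseteq> (\<lambda>s. s \<circ> p \<circ> inv s) ` Sym n" using X by blast
  then have finX: "finite X" using finite_Sym finite_surj by blast
  have card_F: "card (F a) = card Z" if "a \<in> X" for a
  proof -
    obtain t where t: "t \<in> Sym n" "a = t \<circ> p \<circ> inv t" using \<open>a \<in> X\<close> X by blast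
    have bt: "bij t" using t(1) Sym_bij by blast
    have "F a = (\<circ>) t ` Z"
    proof (intro set_eqI iffI)
      fix \<tau> assume "\<tau> \<in> F a"
      then have \<tau>: "\<tau> \<in> Sym n" "\<tau> \<circ> p \<circ> inv \<tau> = a" by (auto simp: F_def)
      define \<sigma> where "\<sigma> = inv t \<circ> \<tau>"
      have \<sigma>: "\<sigma> \<in> Sym n" unfolding \<sigma>_def using \<tau>(1) t(1) Sym_inv Sym_comp by blast
      have \<tau>_eq: "\<tau> = t \<circ> \<sigma>" unfolding \<sigma>_def using bt by (simp add: fun_eq_iff bij_is_surj surj_f_inv_f)
      have "t \<circ> (\<sigma> \<circ> p \<circ> inv \<sigma>) \<circ> inv t = t \<circ> p \<circ> inv t"
        using \<tau>(2) t(2) \<tau>_eq conj_comp[OF bt Sym_bij[OF \<sigma>]] by simp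
      then have "\<sigma> \<circ> p \<circ> inv \<sigma> = p" by (rule conj_inj[OF bt])
      then show "\<tau> \<in> (\<circ>) t ` Z" using \<tau>_eq \<sigma> by (auto simp: Z_def)
    next
      fix \<tau> assume "\<tau> \<in> (\<circ>) t ` Z"
      then obtain \<sigma> where \<sigma>: "\<sigma> \<in> Sym n" "\<sigma> \<circ> p \<circ> inv \<sigma> = p" "\<tau> = t \<circ> \<sigma>" by (auto simp: Z_def)
      then show "\<tau> \<in> F a"
        using t conj_comp[OF bt Sym_bij[OF \<sigma>(1)]] Sym_comp by (auto simp: F_def)
    qed
    moreover have "inj_on ((\<circ>) t) Z"
      by (rule inj_onI) (metis bt bij_is_inj fun.map_comp inv_o_cancel id_comp)
    ultimately show ?thesis by (simp add: card_image)
  qed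
  have "{\<tau> \<in> Sym n. \<tau> \<circ> p \<circ> inv \<tau> \<in> X} = (\<Union>a\<in>X. F a)" by (auto simp: F_def)
  also have "card \<dots> = (\<Sum>a\<in>X. card (F a))"
    using finX finite_Sym by (intro card_UN_disjoint) (auto simp: F_def)
  also have "\<dots> = card X * card Z" using card_F by simp
  finally show ?thesis by (simp add: Z_def)
qed

lemma card_conj_class_Int:
  assumes p: "p \<in> Sym n" and A: "A = {s \<circ> p \<circ> inv s | s. s \<in> Sym n}"
  shows "card (A \<inter> X) * fact n = card A * card {\<sigma> \<in> Sym n. inv \<sigma> \<circ> p \<circ> \<sigma> \<in> X}"
proof -
  define z where "z = card {\<tau> \<in> Sym n. \<tau> \<circ> p \<circ> inv \<tau> = p}"
  have "{\<tau> \<in> Sym n. \<tau> \<circ> p \<circ> inv \<tau> \<in> A} = Sym n" using A by blast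
  then have card_A: "card A * z = fact n"
    using card_conjugators[OF p, of A] A card_Sym by (simp add: z_def)
  have "{\<sigma> \<in> Sym n. inv \<sigma> \<circ> p \<circ> \<sigma> \<in> X} = inv ` {\<tau> \<in> Sym n. \<tau> \<circ> p \<circ> inv \<tau> \<in> A \<inter> X}"
  proof (intro set_eqI iffI)
    fix \<sigma> assume \<sigma>: "\<sigma> \<in> {\<sigma> \<in> Sym n. inv \<sigma> \<circ> p \<circ> \<sigma> \<in> X}"
    then have "inv (inv \<sigma>) = \<sigma>" using Sym_bij by (blast intro: inv_inv_eq)
    moreover have "inv \<sigma> \<circ> p \<circ> inv (inv \<sigma>) \<in> A" using A Sym_inv \<sigma> by blast
    ultimately have "inv \<sigma> \<in> {\<tau> \<in> Sym n. \<tau> \<circ> p \<circ> inv \<tau> \<in> A \<inter> X}"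
      using \<sigma> Sym_inv by auto
    then show "\<sigma> \<in> inv ` {\<tau> \<in> Sym n. \<tau> \<circ> p \<circ> inv \<tau> \<in> A \<inter> X}"
      by (rule image_eqI[rotated]) (use \<open>inv (inv \<sigma>) = \<sigma>\<close> in simp)
  next
    fix \<sigma> assume "\<sigma> \<in> inv ` {\<tau> \<in> Sym n. \<tau> \<circ> p \<circ> inv \<tau> \<in> A \<inter> X}"
    then show "\<sigma> \<in> {\<sigma> \<in> Sym n. inv \<sigma> \<circ> p \<circ> \<sigma> \<in> X}"
      using Sym_bij Sym_inv by (auto simp: inv_inv_eq)
  qed
  moreover have "inj_on inv {\<tau> \<in> Sym n. \<tau> \<circ> p \<circ> inv \<tau> \<in> A \<inter> X}"
    by (rule inj_onI) (metis (no_types, lifting) mem_Collect_eq Sym_bij inv_inv_eq)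
  ultimately have "card {\<sigma> \<in> Sym n. inv \<sigma> \<circ> p \<circ> \<sigma> \<in> X} = card (A \<inter> X) * z"
    using card_conjugators[OF p, of "A \<inter> X"] A
    by (simp add: card_image z_def)
  then show ?thesis
    unfolding card_A[symmetric] by (simp add: mult.left_commute)
qed

definition zip_fun :: "'a list \<Rightarrow> 'b list \<Rightarrow> 'a \<Rightarrow> 'b" where
  "zip_fun I J x = the (map_of (zip I J) x)"

lemma zip_fun_nth: "length I = length J \<Longrightarrow> distinct I \<Longrightarrow> k < length I \<Longrightarrow> zip_fun I J (I ! k) = J ! k"
  unfolding zip_fun_def by (simp add: map_of_zip_nth)

lemma map_zip_fun: "length I = length J \<Longrightarrow> distinct I \<Longrightarrow> map (zip_fun I J) I = J"
  by (rule nth_equalityI) (simp_all add: zip_fun_nth)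

lemma zip_fun_image: "length I = length J \<Longrightarrow> distinct I \<Longrightarrow> zip_fun I J ` set I = set J"
  by (metis map_zip_fun set_map)

lemma inj_on_zip_fun: "length I = length J \<Longrightarrow> distinct I \<Longrightarrow> distinct J \<Longrightarrow> inj_on (zip_fun I J) (set I)"
  by (metis map_zip_fun distinct_map)

lemma umvirate_eq_zip_fun:
  assumes "length I = length J" "distinct I"
  shows "umvirate n I J = {\<rho> \<in> Sym n. \<forall>x\<in>set I. \<rho> x = zip_fun I J x}"
proof -
  have "(\<forall>k<length I. \<rho> (I ! k) = J ! k) \<longleftrightarrow> (\<forall>x\<in>set I. \<rho> x = zip_fun I J x)" for \<rho> :: "nat \<Rightarrow> nat"
  proof
    assume "\<forall>k<length I. \<rho> (I ! k) = J ! k"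
    then show "\<forall>x\<in>set I. \<rho> x = zip_fun I J x"
      using assms by (auto simp: in_set_conv_nth zip_fun_nth)
  next
    assume "\<forall>x\<in>set I. \<rho> x = zip_fun I J x"
    then show "\<forall>k<length I. \<rho> (I ! k) = J ! k"
      using assms by (simp add: zip_fun_nth)
  qed
  then show ?thesis unfolding umvirate_def by blast
qed

lemma card_umvirate:
  assumes "is_umvirate_index n d I J"
  shows "card (umvirate n I J) = fact (n - d)"
proof -
  have I: "length I = d" "length J = d" "distinct I" "distinct J" "set I \<subseteq> {..<n}" "set J \<subseteq> {..<n}"
    using assms by (auto simp: is_umvirate_index_def)
  have "card {\<rho>. \<rho> permutes {..<n} \<and> (\<forall>x\<in>set I. \<rho> x = zip_fun I J x)} = fact (n - card (set I))"
    using I card_permutes_extending[of "{..<n}" "set I" "zip_fun I J"]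
    by (simp add: inj_on_zip_fun zip_fun_image)
  then show ?thesis
    using umvirate_eq_zip_fun[of I J n] I by (simp add: Sym_def distinct_card)
qed

lemma conj_mem_umvirate_iff:
  assumes \<sigma>: "\<sigma> \<in> Sym n" and p: "p \<in> Sym n" and I: "length I = length J" "distinct I"
  shows "inv \<sigma> \<circ> p \<circ> \<sigma> \<in> umvirate n I J \<longleftrightarrow> (\<forall>x\<in>set I. p (\<sigma> x) = \<sigma> (zip_fun I J x))"
proof -
  have "inv \<sigma> \<circ> p \<circ> \<sigma> \<in> Sym n" using \<sigma> p Sym_comp Sym_inv by blast
  moreover have "(inv \<sigma> \<circ> p \<circ> \<sigma>) x = y \<longleftrightarrow> p (\<sigma> x) = \<sigma> y" for x y
    using bij_inv_eq_iff[OF Sym_bij[OF \<sigma>], of y "p (\<sigma> x)"] by auto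
  ultimately show ?thesis
    unfolding umvirate_eq_zip_fun[OF I] by auto
qed

text \<open>The restrictions to \<open>D \<union> f ` D\<close> of the permutations \<open>\<rho>\<close> of \<open>[n]\<close> with \<open>p \<circ> \<rho> = \<rho> \<circ> f\<close> on \<open>D\<close>.\<close>
definition intertwiners :: "nat \<Rightarrow> (nat \<Rightarrow> nat) \<Rightarrow> nat set \<Rightarrow> (nat \<Rightarrow> nat) \<Rightarrow> (nat \<Rightarrow> nat) set" where
  "intertwiners n p D f =
     {\<phi> \<in> (D \<union> f ` D) \<rightarrow>\<^sub>E {..<n}. inj_on \<phi> (D \<union> f ` D) \<and> (\<forall>x\<in>D. p (\<phi> x) = \<phi> (f x))}"

lemma finite_intertwiners: "finite D \<Longrightarrow> finite (intertwiners n p D f)"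
  unfolding intertwiners_def
  by (rule finite_subset[of _ "(D \<union> f ` D) \<rightarrow>\<^sub>E {..<n}"]) (auto intro: finite_PiE)

lemma intertwiners_empty: "card (intertwiners n p {} f) \<le> 1"
proof -
  have "intertwiners n p {} f \<subseteq> {\<lambda>_. undefined}" by (auto simp: intertwiners_def)
  then have "card (intertwiners n p {} f) \<le> card {\<lambda>_::nat. undefined::nat}" by (intro card_mono) auto
  then show ?thesis by simp
qed

lemma restrict_intertwiners:
  assumes "\<phi> \<in> intertwiners n p D f" "D' \<subseteq> D"
  shows "restrict \<phi> (D' \<union> f ` D') \<in> intertwiners n p D' f"
proof -
  have sub: "D' \<union> f ` D' \<subseteq> D \<union> f ` D" using assms(2) by auto
  have "inj_on \<phi> (D' \<union> f ` D')" using assms(1) sub unfolding intertwiners_def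
    by (blast intro: inj_on_subset)
  then have "inj_on (restrict \<phi> (D' \<union> f ` D')) (D' \<union> f ` D')"
    by (rule inj_on_cong[THEN iffD1, rotated]) simp
  moreover have "restrict \<phi> (D' \<union> f ` D') \<in> (D' \<union> f ` D') \<rightarrow>\<^sub>E {..<n}"
    using assms(1) sub unfolding intertwiners_def by (auto simp: PiE_iff)
  moreover have "\<forall>x\<in>D'. p (\<phi> x) = \<phi> (f x)" using assms unfolding intertwiners_def by auto
  ultimately show ?thesis unfolding intertwiners_def by auto
qed

lemma intertwiners_eqI:
  assumes "\<phi> \<in> intertwiners n p D f" "\<psi> \<in> intertwiners n p D f" "\<And>z. z \<in> D \<union> f ` D \<Longrightarrow> \<phi> z = \<psi> z"
  shows "\<phi> = \<psi>"
  using assms unfolding intertwiners_def by (auto intro: PiE_ext)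

text \<open>A point whose image leaves \<open>D\<close>: its value is free (factor \<open>n\<close>) unless it is itself the image of
  another point of \<open>D\<close>, in which case it is already determined.\<close>
lemma card_intertwiners_remove_point:
  assumes fin: "finite D" and inj: "inj_on f D" and a: "a \<in> D" "f a \<notin> D"
  obtains b where "b \<le> 1" "card (f ` D - D) = card (f ` (D - {a}) - (D - {a})) + b"
    "card (intertwiners n p D f) \<le> card (intertwiners n p (D - {a}) f) * n ^ b"
proof -
  define D' where "D' = D - {a}"
  define S' where "S' = D' \<union> f ` D'"
  have fa: "f a \<notin> f ` D'" using inj a by (auto simp: D'_def inj_on_def)
  have img: "f ` D - D = insert (f a) (f ` D' - D)" using a by (auto simp: D'_def)
  have card_img: "card (f ` D - D) = Suc (card (f ` D' - D))"
    unfolding img using fin fa by (simp add: D'_def)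
  have fin': "finite (intertwiners n p D' f)" using fin by (simp add: finite_intertwiners D'_def)
  have restr: "restrict \<phi> S' \<in> intertwiners n p D' f" if "\<phi> \<in> intertwiners n p D f" for \<phi>
    using restrict_intertwiners[OF that, of D'] by (auto simp: S'_def D'_def)
  have determined: "\<phi> = \<psi>"
    if "\<phi> \<in> intertwiners n p D f" "\<psi> \<in> intertwiners n p D f" "restrict \<phi> S' = restrict \<psi> S'" "\<phi> a = \<psi> a"
    for \<phi> \<psi>
  proof (rule intertwiners_eqI[OF that(1,2)])
    fix z assume z: "z \<in> D \<union> f ` D"
    have "p (\<phi> a) = \<phi> (f a)" "p (\<psi> a) = \<psi> (f a)" using that(1,2) a(1) by (auto simp: intertwiners_def)
    moreover have "\<phi> z = \<psi> z" if "z \<in> S'" using \<open>restrict \<phi> S' = restrict \<psi> S'\<close> that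
      by (metis restrict_apply')
    moreover have "z \<in> S' \<or> z = a \<or> z = f a" using z by (auto simp: S'_def D'_def)
    ultimately show "\<phi> z = \<psi> z" using that(4) by auto
  qed
  show ?thesis
  proof (cases "a \<in> f ` D'")
    case True
    have "f ` D' - D' = insert a (f ` D' - D)" using True by (auto simp: D'_def)
    then have "card (f ` D - D) = card (f ` D' - D') + 0"
      using card_img fin a(1) by (simp add: D'_def)
    moreover have "inj_on (\<lambda>\<phi>. restrict \<phi> S') (intertwiners n p D f)"
    proof (rule inj_onI)
      fix \<phi> \<psi> assume "\<phi> \<in> intertwiners n p D f" "\<psi> \<in> intertwiners n p D f" "restrict \<phi> S' = restrict \<psi> S'"
      moreover have "a \<in> S'" using True by (simp add: S'_def)
      ultimately show "\<phi> = \<psi>" using determined by (metis restrict_apply')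
    qed
    then have "card (intertwiners n p D f) \<le> card (intertwiners n p D' f) * n ^ 0"
      using card_inj_on_le[OF _ _ fin'] restr by auto
    ultimately show ?thesis using that[of 0] by (simp add: D'_def)
  next
    case False
    have "f ` D' - D' = f ` D' - D" using False by (auto simp: D'_def)
    then have "card (f ` D - D) = card (f ` D' - D') + 1"
      using card_img by simp
    moreover have "inj_on (\<lambda>\<phi>. (restrict \<phi> S', \<phi> a)) (intertwiners n p D f)"
      by (rule inj_onI) (use determined in blast)
    moreover have "(\<lambda>\<phi>. (restrict \<phi> S', \<phi> a)) ` intertwiners n p D f \<subseteq> intertwiners n p D' f \<times> {..<n}"
      using restr a(1) by (auto simp: intertwiners_def PiE_iff)
    ultimately have "card (intertwiners n p D f) \<le> card (intertwiners n p D' f) * n ^ 1"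
      using card_inj_on_le[of _ _ "intertwiners n p D' f \<times> {..<n}"] fin'
      by (simp add: card_cartesian_product)
    then show ?thesis using that[of 1] \<open>card (f ` D - D) = card (f ` D' - D') + 1\<close> by (simp add: D'_def)
  qed
qed

definition points_on_cycles :: "nat \<Rightarrow> (nat \<Rightarrow> nat) \<Rightarrow> nat \<Rightarrow> nat set" where
  "points_on_cycles n p m = \<Union>{C. \<exists>y\<in>{..<n}. C = orbit p y \<and> card C = m}"

lemma points_on_cycles_subset:
  assumes "p permutes {..<n}"
  shows "points_on_cycles n p m \<subseteq> {..<n}"
proof
  fix z assume "z \<in> points_on_cycles n p m"
  then obtain y where "y < n" "z \<in> orbit p y" by (auto simp: points_on_cycles_def)
  then show "z \<in> {..<n}" using permutes_orbit_subset[OF assms, of y] by auto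
qed

lemma card_points_on_cycles_le:
  fixes r :: real
  assumes r: "r \<ge> 0" and cyc: "real (num_cycles n p m) \<le> (r / 2) ^ m"
  shows "real (card (points_on_cycles n p m)) \<le> r ^ m"
proof -
  define Cs where "Cs = {C. \<exists>y\<in>{..<n}. C = orbit p y \<and> card C = m}"
  have "card (\<Union>Cs) \<le> sum card Cs" by (rule card_Union_le_sum_card)
  also have "sum card Cs = m * num_cycles n p m" unfolding Cs_def num_cycles_def by simp
  finally have "real (card (\<Union>Cs)) \<le> real m * real (num_cycles n p m)"
    by (metis of_nat_le_iff of_nat_mult)
  also have "\<dots> \<le> 2 ^ m * (r / 2) ^ m"
  proof (rule mult_mono)
    show "real m \<le> 2 ^ m"
      using less_exp[of m] by (metis less_imp_le of_nat_le_iff of_nat_numeral of_nat_power)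
  qed (use cyc r in auto)
  also have "\<dots> = r ^ m" by (simp add: power_mult_distrib[symmetric])
  finally show ?thesis by (simp add: Cs_def points_on_cycles_def)
qed

lemma permutation_not_in_orbit:
  assumes "permutation g" "y \<notin> orbit g x"
  shows "g y \<notin> orbit g x"
proof
  assume "g y \<in> orbit g x"
  then have "x \<in> orbit g y"
    using orbit_swap[of x g "g y"] permutation_self_in_orbit[OF assms(1)]
      permutation_orbit_step[OF assms(1), of y] by simp
  then show False
    using orbit_swap[of y g x] permutation_self_in_orbit[OF assms(1), of y] assms(2) by simp
qed

lemma closed_inj_on_permutes:
  assumes fin: "finite D" and inj: "inj_on f D" and closed: "f ` D \<subseteq> D"
  shows "(\<lambda>y. if y \<in> D then f y else y) permutes D"
proof (rule bij_imp_permutes)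
  have "f ` D = D" using endo_inj_surj[OF fin closed inj] .
  then show "bij_betw (\<lambda>y. if y \<in> D then f y else y) D D"
    using inj by (auto simp: bij_betw_def inj_on_def image_def)
qed simp

lemma intertwiner_funpow:
  assumes \<phi>: "\<phi> \<in> intertwiners n p D f" and g: "g ` D \<subseteq> D" "\<forall>y\<in>D. g y = f y" and x: "x \<in> D"
  shows "\<phi> ((g ^^ k) x) = (p ^^ k) (\<phi> x)"
proof (induction k)
  case (Suc k)
  have "(g ^^ k) x \<in> D" using g(1) x by (induction k) auto
  then show ?case using Suc \<phi> g(2) by (auto simp: intertwiners_def)
qed simp

lemma orbit_intertwiner:
  assumes p: "p permutes {..<n}" and \<phi>: "\<phi> \<in> intertwiners n p D f"
    and g: "g permutes D" "\<forall>y\<in>D. g y = f y" and x: "x \<in> D" and fin: "finite D"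
  shows "orbit p (\<phi> x) = \<phi> ` orbit g x"
proof -
  have "permutation p" "permutation g" using p g(1) fin permutation_permutes by blast+
  moreover have "\<phi> ((g ^^ k) x) = (p ^^ k) (\<phi> x)" for k
    using intertwiner_funpow[OF \<phi> _ g(2) x] permutes_image[OF g(1)] by simp
  ultimately show ?thesis
    by (simp add: orbit_altdef_permutation flip: \<open>\<And>k. \<phi> ((g ^^ k) x) = (p ^^ k) (\<phi> x)\<close>) blast
qed

lemma intertwiner_mem_points_on_cycles:
  assumes p: "p permutes {..<n}" and \<phi>: "\<phi> \<in> intertwiners n p D f"
    and g: "g permutes D" "\<forall>y\<in>D. g y = f y" and x: "x \<in> D" and fin: "finite D"
  shows "\<phi> x \<in> points_on_cycles n p (card (orbit g x))"
proof -
  have "inj_on \<phi> (D \<union> f ` D)" using \<phi> by (simp add: intertwiners_def)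
  then have "inj_on \<phi> (orbit g x)" by (rule inj_on_subset) (use permutes_orbit_subset[OF g(1) x] in blast)
  then have "card (orbit p (\<phi> x)) = card (orbit g x)"
    unfolding orbit_intertwiner[OF assms] by (rule card_image)
  moreover have "\<phi> x \<in> {..<n}" using \<phi> x by (auto simp: intertwiners_def PiE_iff)
  moreover have "\<phi> x \<in> orbit p (\<phi> x)"
    using p by (intro permutation_self_in_orbit) (auto simp: permutation_permutes)
  ultimately show ?thesis unfolding points_on_cycles_def by blast
qed

lemma card_intertwiners_remove_cycle:
  fixes r :: real
  assumes p: "p permutes {..<n}" and r: "r \<ge> 0"
    and cyc: "\<forall>l\<ge>1. real (num_cycles n p l) \<le> (r / 2) ^ l"
    and fin: "finite D" and inj: "inj_on f D" and closed: "f ` D \<subseteq> D" and x: "x \<in> D"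
  obtains C where "C \<subseteq> D" "x \<in> C" "f ` (D - C) \<subseteq> D - C"
    "real (card (intertwiners n p D f)) \<le> real (card (intertwiners n p (D - C) f)) * r ^ card C"
proof -
  define g where "g = (\<lambda>y. if y \<in> D then f y else y)"
  have gp: "g permutes D" unfolding g_def by (rule closed_inj_on_permutes[OF fin inj closed])
  have g_f: "\<forall>y\<in>D. g y = f y" by (simp add: g_def)
  have perm: "permutation g" using gp fin permutation_permutes by blast
  define C where "C = orbit g x"
  define Y where "Y = points_on_cycles n p (card C)"
  have CD: "C \<subseteq> D" unfolding C_def by (rule permutes_orbit_subset[OF gp x])
  have xC: "x \<in> C" unfolding C_def by (rule permutation_self_in_orbit[OF perm])
  have closed': "f ` (D - C) \<subseteq> D - C"
    using permutation_not_in_orbit[OF perm] closed g_f by (fastforce simp: C_def)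
  have "finite C" using CD fin by (rule finite_subset)
  then have "card C \<ge> 1" using xC by (auto simp: Suc_le_eq card_gt_0_iff)
  then have card_Y: "real (card Y) \<le> r ^ card C"
    unfolding Y_def using cyc by (intro card_points_on_cycles_le[OF r]) simp
  have finY: "finite Y"
    unfolding Y_def using points_on_cycles_subset[OF p] by (rule finite_subset) simp
  have "inj_on (\<lambda>\<phi>. (restrict \<phi> (D - C), \<phi> x)) (intertwiners n p D f)"
  proof (rule inj_onI)
    fix \<phi> \<psi> assume \<phi>: "\<phi> \<in> intertwiners n p D f" and \<psi>: "\<psi> \<in> intertwiners n p D f"
      and eq: "(restrict \<phi> (D - C), \<phi> x) = (restrict \<psi> (D - C), \<psi> x)"
    have "\<phi> z = \<psi> z" if "z \<in> C" for z
      using that eq intertwiner_funpow[OF \<phi> _ g_f x] intertwiner_funpow[OF \<psi> _ g_f x] permutes_image[OF gp]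
      by (auto simp: C_def orbit_altdef_permutation[OF perm])
    moreover have "\<phi> z = \<psi> z" if "z \<in> D - C" for z
      using that eq by (metis Pair_inject restrict_apply')
    ultimately show "\<phi> = \<psi>"
      using closed by (intro intertwiners_eqI[OF \<phi> \<psi>]) blast
  qed
  moreover have "(\<lambda>\<phi>. (restrict \<phi> (D - C), \<phi> x)) ` intertwiners n p D f \<subseteq> intertwiners n p (D - C) f \<times> Y"
  proof (rule image_subsetI)
    fix \<phi> assume \<phi>: "\<phi> \<in> intertwiners n p D f"
    have "(D - C) \<union> f ` (D - C) = D - C" using closed' by blast
    then have "restrict \<phi> (D - C) \<in> intertwiners n p (D - C) f"
      using restrict_intertwiners[OF \<phi>, of "D - C"] by simp
    moreover have "\<phi> x \<in> Y"
      unfolding Y_def C_def by (rule intertwiner_mem_points_on_cycles[OF p \<phi> gp g_f x fin])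
    ultimately show "(restrict \<phi> (D - C), \<phi> x) \<in> intertwiners n p (D - C) f \<times> Y" by blast
  qed
  moreover have "finite (intertwiners n p (D - C) f)" using fin by (simp add: finite_intertwiners)
  ultimately have "card (intertwiners n p D f) \<le> card (intertwiners n p (D - C) f \<times> Y)"
    using finY by (intro card_inj_on_le) auto
  then have "real (card (intertwiners n p D f)) \<le> real (card (intertwiners n p (D - C) f)) * real (card Y)"
    by (simp add: card_cartesian_product flip: of_nat_mult)
  also have "\<dots> \<le> real (card (intertwiners n p (D - C) f)) * r ^ card C"
    using card_Y by (intro mult_left_mono) auto
  finally show ?thesis using that CD xC closed' by blast
qed

lemma card_image_Diff_le: "finite D \<Longrightarrow> card (f ` D - D) \<le> card D"
  by (meson Diff_subset card_image_le card_mono finite_imageI le_trans)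

lemma card_intertwiners_le:
  fixes r :: real
  assumes p: "p permutes {..<n}" and r: "r \<ge> 1"
    and cyc: "\<forall>l\<ge>1. real (num_cycles n p l) \<le> (r / 2) ^ l"
  shows "finite D \<Longrightarrow> inj_on f D \<Longrightarrow>
    real (card (intertwiners n p D f)) \<le> real n ^ card (f ` D - D) * r ^ (card D - card (f ` D - D))"
proof (induction "card D" arbitrary: D rule: less_induct)
  case less
  consider (escape) a where "a \<in> D" "f a \<notin> D" | (empty) "D = {}" | (cycle) x where "x \<in> D" "f ` D \<subseteq> D"
    by blast
  then show ?case
  proof cases
    case escape
    define D' where "D' = D - {a}"
    obtain b where b: "b \<le> 1" "card (f ` D - D) = card (f ` D' - D') + b"
      "card (intertwiners n p D f) \<le> card (intertwiners n p D' f) * n ^ b"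
      using card_intertwiners_remove_point[OF less.prems escape] unfolding D'_def by blast
    have card_D: "card D = Suc (card D')"
      unfolding D'_def using less.prems(1) escape(1) by (rule card_Suc_Diff1[symmetric])
    have "finite D'" "inj_on f D'" using less.prems by (auto simp: D'_def inj_on_subset)
    then have IH: "real (card (intertwiners n p D' f))
        \<le> real n ^ card (f ` D' - D') * r ^ (card D' - card (f ` D' - D'))"
      using less.hyps[of D'] card_D by simp
    have e': "card (f ` D' - D') \<le> card D'" using \<open>finite D'\<close> by (rule card_image_Diff_le)
    have "real (card (intertwiners n p D f)) \<le> real (card (intertwiners n p D' f)) * real n ^ b"
      using b(3) by (metis of_nat_le_iff of_nat_mult of_nat_power)
    also have "\<dots> \<le> real n ^ card (f ` D' - D') * r ^ (card D' - card (f ` D' - D')) * real n ^ b"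
      using IH by (intro mult_right_mono) auto
    also have "\<dots> = real n ^ card (f ` D - D) * r ^ (card D' - card (f ` D' - D'))"
      using b(2) by (simp add: power_add)
    also have "\<dots> \<le> real n ^ card (f ` D - D) * r ^ (card D - card (f ` D - D))"
      using r b(1,2) card_D e' by (intro mult_left_mono power_increasing) auto
    finally show ?thesis .
  next
    case empty
    then show ?thesis using intertwiners_empty[of n p f] by simp
  next
    case cycle
    obtain C where C: "C \<subseteq> D" "x \<in> C" "f ` (D - C) \<subseteq> D - C"
      "real (card (intertwiners n p D f)) \<le> real (card (intertwiners n p (D - C) f)) * r ^ card C"
      using card_intertwiners_remove_cycle[OF p _ cyc less.prems cycle(2,1)] r by auto
    have "card (D - C) < card D"
      using C(1,2) less.prems(1) by (intro psubset_card_mono) auto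
    moreover have "finite (D - C)" "inj_on f (D - C)" using less.prems by (auto simp: inj_on_subset)
    ultimately have "real (card (intertwiners n p (D - C) f)) \<le> real n ^ card (f ` (D - C) - (D - C))
        * r ^ (card (D - C) - card (f ` (D - C) - (D - C)))"
      by (rule less.hyps)
    moreover have "f ` (D - C) - (D - C) = {}" using C(3) by blast
    ultimately have IH: "real (card (intertwiners n p (D - C) f)) \<le> r ^ card (D - C)"
      by simp
    have "finite C" using C(1) less.prems(1) by (rule finite_subset)
    then have card_D: "card D = card (D - C) + card C"
      using C(1) less.prems(1) by (simp add: card_Diff_subset card_mono)
    have "real (card (intertwiners n p D f)) \<le> r ^ card (D - C) * r ^ card C"
      using C(4) IH r by (meson mult_right_mono order_trans zero_le_power zero_le_one le_trans)
    also have "\<dots> = r ^ card D" by (simp add: card_D power_add)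
    finally have "real (card (intertwiners n p D f)) \<le> r ^ card D" .
    moreover have no_escape: "f ` D - D = {}" using cycle(2) by blast
    ultimately show ?thesis unfolding no_escape by simp
  qed
qed

lemma card_intertwining_perms_le:
  assumes S: "D \<union> f ` D \<subseteq> {..<n}"
  shows "card {\<rho> \<in> Sym n. \<forall>x\<in>D. p (\<rho> x) = \<rho> (f x)}
     \<le> card (intertwiners n p D f) * fact (n - card (D \<union> f ` D))"
proof -
  define S where "S = D \<union> f ` D"
  define P where "P = intertwiners n p D f"
  define E where "E \<phi> = {\<rho> \<in> Sym n. \<forall>x\<in>S. \<rho> x = \<phi> x}" for \<phi>
  have "finite D" using S by (meson finite_lessThan finite_subset le_sup_iff)
  then have finP: "finite P" by (simp add: P_def finite_intertwiners)
  have cover: "{\<rho> \<in> Sym n. \<forall>x\<in>D. p (\<rho> x) = \<rho> (f x)} \<subseteq> (\<Union>\<phi>\<in>P. E \<phi>)"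
  proof
    fix \<rho> assume "\<rho> \<in> {\<rho> \<in> Sym n. \<forall>x\<in>D. p (\<rho> x) = \<rho> (f x)}"
    then have \<rho>: "\<rho> permutes {..<n}" "\<forall>x\<in>D. p (\<rho> x) = \<rho> (f x)" by (auto simp: Sym_def)
    have "restrict \<rho> S \<in> S \<rightarrow>\<^sub>E {..<n}"
      using S permutes_in_image[OF \<rho>(1)] by (auto simp: S_def)
    moreover have "inj_on (restrict \<rho> S) S"
      using permutes_inj[OF \<rho>(1)] by (auto simp: inj_on_def)
    moreover have "\<forall>x\<in>D. p (restrict \<rho> S x) = restrict \<rho> S (f x)"
      using \<rho>(2) by (simp add: S_def)
    ultimately have "restrict \<rho> S \<in> P" by (simp add: P_def intertwiners_def S_def)
    moreover have "\<rho> \<in> E (restrict \<rho> S)" using \<rho>(1) by (simp add: E_def Sym_def)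
    ultimately show "\<rho> \<in> (\<Union>\<phi>\<in>P. E \<phi>)" by blast
  qed
  have card_E: "card (E \<phi>) = fact (n - card S)" if "\<phi> \<in> P" for \<phi>
  proof -
    have "inj_on \<phi> S" "\<phi> ` S \<subseteq> {..<n}"
      using that by (auto simp: P_def intertwiners_def S_def PiE_iff)
    then show ?thesis
      using card_permutes_extending[of "{..<n}" S \<phi>] S by (simp add: E_def Sym_def S_def)
  qed
  have "finite (\<Union>\<phi>\<in>P. E \<phi>)" by (rule finite_subset[OF _ finite_Sym]) (auto simp: E_def)
  then have "card {\<rho> \<in> Sym n. \<forall>x\<in>D. p (\<rho> x) = \<rho> (f x)} \<le> card (\<Union>\<phi>\<in>P. E \<phi>)"
    using cover by (rule card_mono)
  also have "\<dots> \<le> (\<Sum>\<phi>\<in>P. card (E \<phi>))" by (rule card_UN_le[OF finP])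
  also have "\<dots> = card P * fact (n - card S)" using card_E by simp
  finally show ?thesis by (simp add: P_def S_def)
qed

lemma power_mult_fact_le:
  fixes r :: real
  assumes r: "r \<ge> 5" and "5 * (d + i) \<le> 4 * n"
  shows "real n ^ i * fact (n - (d + i)) \<le> r ^ i * fact (n - d)"
  using assms(2)
proof (induction i)
  case (Suc i)
  have lt: "d + i < n" using Suc.prems by simp
  have fact_eq: "fact (n - (d + i)) = real (n - (d + i)) * fact (n - (d + Suc i))"
    using lt by (metis Suc_diff_Suc add_Suc_right fact_Suc of_nat_fact of_nat_mult)
  have "5 * n \<le> 25 * (n - (d + i))" using Suc.prems lt by presburger
  then have "real n \<le> 5 * real (n - (d + i))" by linarith
  also have "\<dots> \<le> r * real (n - (d + i))" using r by (intro mult_right_mono) auto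
  finally have step: "real n * fact (n - (d + Suc i)) \<le> r * fact (n - (d + i))"
    unfolding fact_eq by (simp add: mult.assoc mult_right_mono)
  have "real n ^ Suc i * fact (n - (d + Suc i)) = real n ^ i * (real n * fact (n - (d + Suc i)))"
    by (simp add: mult_ac)
  also have "\<dots> \<le> real n ^ i * (r * fact (n - (d + i)))"
    using step by (intro mult_left_mono) auto
  also have "\<dots> = r * (real n ^ i * fact (n - (d + i)))" by (simp add: mult_ac)
  also have "\<dots> \<le> r * (r ^ i * fact (n - d))" using Suc r by (intro mult_left_mono) auto
  finally show ?case by simp
qed simp

lemma exp_le_25_power:
  assumes "2 * n \<le> 5 * d"
  shows "exp (real n) \<le> 25 ^ d"
proof -
  have "exp (real n) ^ 2 = exp (real (2 * n))" by (simp add: exp_of_nat_mult[symmetric] mult.commute)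
  also have "\<dots> \<le> exp (real (5 * d))" using assms by simp
  also have "\<dots> = exp 1 ^ (5 * d)" by (metis exp_of_nat_mult mult.right_neutral)
  also have "\<dots> \<le> 3 ^ (5 * d)" using exp_le by (intro power_mono) auto
  also have "\<dots> \<le> ((25::real) ^ 2) ^ d" by (simp add: power_mult power_mono)
  also have "\<dots> = (25 ^ d) ^ 2" by (simp only: power_mult[symmetric] mult.commute)
  finally show ?thesis by (rule power2_le_imp_le) simp
qed

lemma card_intertwining_perms_umvirate_le:
  fixes r :: real
  assumes p: "p \<in> Sym n" and r: "r \<ge> 5"
    and cyc: "\<forall>l\<ge>1. real (num_cycles n p l) \<le> (r / 2) ^ l"
    and idx: "is_umvirate_index n d I J" and small: "5 * d \<le> 2 * n"
  shows "real (card {\<sigma> \<in> Sym n. \<forall>x\<in>set I. p (\<sigma> x) = \<sigma> (zip_fun I J x)}) \<le> r ^ d * fact (n - d)"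
proof -
  have I: "length I = d" "length J = d" "distinct I" "distinct J" "set I \<subseteq> {..<n}" "set J \<subseteq> {..<n}"
    using idx by (auto simp: is_umvirate_index_def)
  define f where "f = zip_fun I J"
  define e where "e = card (f ` set I - set I)"
  have img: "f ` set I = set J" using I by (simp add: f_def zip_fun_image)
  have card_I: "card (set I) = d" using I by (simp add: distinct_card)
  have e_le: "e \<le> d" using card_image_Diff_le[of "set I" f] card_I by (simp add: e_def)
  have "set I \<union> f ` set I = set I \<union> (f ` set I - set I)" by blast
  also have "card \<dots> = card (set I) + card (f ` set I - set I)"
    by (rule card_Un_disjoint) auto
  finally have card_S: "card (set I \<union> f ` set I) = d + e"
    by (simp only: e_def card_I)
  have "set I \<union> f ` set I \<subseteq> {..<n}" using I img by simp
  then have "card {\<sigma> \<in> Sym n. \<forall>x\<in>set I. p (\<sigma> x) = \<sigma> (f x)}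
      \<le> card (intertwiners n p (set I) f) * fact (n - (d + e))"
    unfolding card_S[symmetric] by (rule card_intertwining_perms_le)
  then have "real (card {\<sigma> \<in> Sym n. \<forall>x\<in>set I. p (\<sigma> x) = \<sigma> (f x)})
      \<le> real (card (intertwiners n p (set I) f)) * fact (n - (d + e))"
    using of_nat_mono[where 'a=real] by fastforce
  also have "\<dots> \<le> real n ^ e * r ^ (d - e) * fact (n - (d + e))"
  proof (rule mult_right_mono)
    have "p permutes {..<n}" using p by (simp add: Sym_def)
    moreover have "inj_on f (set I)" using I by (simp add: f_def inj_on_zip_fun)
    ultimately show "real (card (intertwiners n p (set I) f)) \<le> real n ^ e * r ^ (d - e)"
      using card_intertwiners_le[of p n r "set I" f] r cyc unfolding e_def card_I[symmetric] by simp
  qed simp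
  also have "\<dots> = r ^ (d - e) * (real n ^ e * fact (n - (d + e)))" by (simp add: mult_ac)
  also have "\<dots> \<le> r ^ (d - e) * (r ^ e * fact (n - d))"
    using power_mult_fact_le[OF r, of d e n] small e_le r by (intro mult_left_mono) auto
  also have "\<dots> = r ^ d * fact (n - d)"
    using e_le by (simp add: mult.assoc power_add[symmetric])
  finally show ?thesis by (simp add: f_def)
qed

lemma mu_U_conj_class:
  assumes p: "p \<in> Sym n" and A: "A = {s \<circ> p \<circ> inv s | s. s \<in> Sym n}"
    and idx: "is_umvirate_index n d I J"
  shows "mu_U n I J A
    = mu n A * real (card {\<sigma> \<in> Sym n. \<forall>x\<in>set I. p (\<sigma> x) = \<sigma> (zip_fun I J x)}) / fact (n - d)"
proof -
  have I: "length I = length J" "distinct I" using idx by (auto simp: is_umvirate_index_def)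
  have "{\<sigma> \<in> Sym n. inv \<sigma> \<circ> p \<circ> \<sigma> \<in> umvirate n I J}
      = {\<sigma> \<in> Sym n. \<forall>x\<in>set I. p (\<sigma> x) = \<sigma> (zip_fun I J x)}"
    by (rule Collect_cong) (use conj_mem_umvirate_iff[OF _ p I] in blast)
  then have "real (card (A \<inter> umvirate n I J)) * fact n
      = real (card A) * real (card {\<sigma> \<in> Sym n. \<forall>x\<in>set I. p (\<sigma> x) = \<sigma> (zip_fun I J x)})"
    using arg_cong[OF card_conj_class_Int[OF p A, of "umvirate n I J"], of real] by simp
  then have "real (card (A \<inter> umvirate n I J))
      = real (card A) * real (card {\<sigma> \<in> Sym n. \<forall>x\<in>set I. p (\<sigma> x) = \<sigma> (zip_fun I J x)}) / fact n"
    by (simp add: eq_divide_eq)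
  then show ?thesis
    unfolding mu_U_def mu_def card_umvirate[OF idx] by simp
qed

lemma mu_U_le_if_small_d:
  fixes r :: real
  assumes p: "p \<in> Sym n" and A: "A = {s \<circ> p \<circ> inv s | s. s \<in> Sym n}" and r: "r \<ge> 5"
    and cyc: "\<forall>l\<ge>1. real (num_cycles n p l) \<le> (r / 2) ^ l"
    and idx: "is_umvirate_index n d I J" and small: "5 * d \<le> 2 * n"
  shows "mu_U n I J A \<le> r ^ d * mu n A"
proof -
  have "mu_U n I J A
      = mu n A * real (card {\<sigma> \<in> Sym n. \<forall>x\<in>set I. p (\<sigma> x) = \<sigma> (zip_fun I J x)}) / fact (n - d)"
    by (rule mu_U_conj_class[OF p A idx])
  also have "\<dots> \<le> mu n A * (r ^ d * fact (n - d)) / fact (n - d)"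
    using card_intertwining_perms_umvirate_le[OF p r cyc idx small]
    by (intro divide_right_mono mult_left_mono) (auto simp: mu_def)
  also have "\<dots> = r ^ d * mu n A" by simp
  finally show ?thesis .
qed

lemma mu_U_le_if_large_d:
  fixes r :: real
  assumes r: "r \<ge> 25" and mu: "exp (- real n) \<le> mu n A" and large: "2 * n \<le> 5 * d"
  shows "mu_U n I J A \<le> r ^ d * mu n A"
proof -
  have "finite (umvirate n I J)" by (rule finite_subset[OF _ finite_Sym]) (auto simp: umvirate_def)
  then have "card (A \<inter> umvirate n I J) \<le> card (umvirate n I J)" by (intro card_mono) auto
  then have "mu_U n I J A \<le> 1"
    unfolding mu_U_def by (cases "card (umvirate n I J) = 0") (auto simp: divide_le_eq_1)
  also have "1 = exp (real n) * exp (- real n)" by (simp add: exp_minus_inverse)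
  also have "\<dots> \<le> r ^ d * mu n A"
  proof (rule mult_mono)
    have "(25::real) ^ d \<le> r ^ d" using r by (intro power_mono) auto
    then show "exp (real n) \<le> r ^ d" using exp_le_25_power[OF large] by linarith
  qed (use mu r in auto)
  finally show ?thesis .
qed

theorem lemma5p1:
  shows "\<exists>n0::nat. \<forall>n > n0. \<forall>(r::real) (A :: (nat \<Rightarrow> nat) set).
     r \<ge> 25 \<longrightarrow> A \<subseteq> Sym n \<longrightarrow> conj_class n A \<longrightarrow> mu n A \<ge> exp (- real n) \<longrightarrow>
     (\<forall>p \<in> A. \<forall>l \<ge> 1. real (num_cycles n p l) \<le> (r / 2) ^ l) \<longrightarrow>
     r_global n r A"
proof (intro exI[of _ 0] allI impI)
  fix n :: nat and r :: real and A :: "(nat \<Rightarrow> nat) set"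
  assume r: "r \<ge> 25" and "conj_class n A" and mu: "mu n A \<ge> exp (- real n)"
    and cyc: "\<forall>p \<in> A. \<forall>l \<ge> 1. real (num_cycles n p l) \<le> (r / 2) ^ l"
  then obtain p where p: "p \<in> Sym n" and A: "A = {s \<circ> p \<circ> inv s | s. s \<in> Sym n}"
    unfolding conj_class_def by blast
  have "p \<in> A" using A id_in_Sym[of n] by force
  then have cyc_p: "\<forall>l \<ge> 1. real (num_cycles n p l) \<le> (r / 2) ^ l" using cyc by blast
  show "r_global n r A" unfolding r_global_def
  proof (intro allI impI)
    fix d I J assume idx: "is_umvirate_index n d I J"
    show "mu_U n I J A \<le> r ^ d * mu n A"
    proof (cases "5 * d \<le> 2 * n")
      case True
      then show ?thesis using mu_U_le_if_small_d[OF p A _ cyc_p idx] r by simp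
    qed (use mu_U_le_if_large_d[OF r mu] in auto)
  qed
qed

end
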